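(* Suppose the p-values are conditionally super-uniform: for every $t$ with $\theta_t=0$, $\mathbb{P}(p_t\le U\mid\mathcal{F}_{t-1})\le U$ a.s. for every $\mathcal F_{t-1}$-measurable $[0,1]$-valued $U$. Fix $d\in(0,1]$ and let $\mathrm{mem\text{-}FDP}^*(t)=\sum_{j\in\mathcal{H}_0(t)}\frac{\alpha_j}{dR^{\mathrm d}_{j-1}+1}$. Then for every $t\ge1$: if $\mathbb{E}[\mathrm{mem\text{-}FDP}^*(t)]\le\alpha$, then $\mathrm{mem\text{-}FDR}(t)\le\alpha$.
   Context: Let $\alpha\in(0,1)$ be a target level. Hypotheses are indexed by $t=1,2,\dots$; $\theta_t\in\{0,1\}$ is a fixed (non-random) indicator with $\theta_t=0$ iff the $t$-th null hypothesis is true. $p_1,p_2,\dots$ are $[0,1]$-valued random variables (p-values). Testing levels $\alpha_1,\alpha_2,\dots$ are $[0,1]$-valued random variables and the decisions are $\delta_t=\mathbb{1}\{p_t\le\alpha_t\}$. Let $\mathcal{F}_t=\sigma(\delta_1,\dots,\delta_t)$, $\mathcal{F}_0$ trivial; each $\alpha_t$ is required to be $\mathcal{F}_{t-1}$-measurable. $\mathcal{H}_0(t)=\{j\le t:\theta_j=0\}$. For a decay parameter $d\in(0,1]$, $R^{\mathrm d}_t=\sum_{j=1}^t d^{t-j}\delta_j$ with $R^{\mathrm d}_0=0$, and $\mathrm{mem\text{-}FDR}(t)=\mathbb{E}\big[\sum_{j\in\mathcal{H}_0(t)}d^{t-j}\delta_j\big/R^{\mathrm d}_t\big]$ with the convention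 $0/0=0$. *)

theory Defs
  imports "HOL-Probability.Probability"
begin

definition decision :: "(nat \<Rightarrow> 'a \<Rightarrow> real) \<Rightarrow> (nat \<Rightarrow> 'a \<Rightarrow> real) \<Rightarrow> nat \<Rightarrow> 'a \<Rightarrow> real" where
  "decision p alpha t \<omega> = (if p t \<omega> \<le> alpha t \<omega> then 1 else 0)"

definition dec_filtration :: "'a measure \<Rightarrow> (nat \<Rightarrow> 'a \<Rightarrow> real) \<Rightarrow> nat \<Rightarrow> 'a measure" where
  "dec_filtration M \<delta> t =
     sigma (space M) {\<delta> j -` A \<inter> space M | j A. j \<in> {1..t} \<and> A \<in> sets (borel :: real measure)}"

definition H0 :: "(nat \<Rightarrow> nat) \<Rightarrow> nat \<Rightarrow> nat set" where
  "H0 \<theta> t = {j \<in> {1..t}. \<theta> j = 0}"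

definition decay_R :: "real \<Rightarrow> (nat \<Rightarrow> 'a \<Rightarrow> real) \<Rightarrow> nat \<Rightarrow> 'a \<Rightarrow> real" where
  "decay_R d \<delta> t \<omega> = (\<Sum>j=1..t. d ^ (t - j) * \<delta> j \<omega>)"

text \<open>mem-FDR(t); division by zero gives 0 in Isabelle, matching 0/0 = 0.\<close>
definition mem_FDR :: "'a measure \<Rightarrow> real \<Rightarrow> (nat \<Rightarrow> nat) \<Rightarrow> (nat \<Rightarrow> 'a \<Rightarrow> real) \<Rightarrow> nat \<Rightarrow> real" where
  "mem_FDR M d \<theta> \<delta> t =
     integral\<^sup>L M (\<lambda>\<omega>. (\<Sum>j\<in>H0 \<theta> t. d ^ (t - j) * \<delta> j \<omega>) / decay_R d \<delta> t \<omega>)"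

definition mem_FDP_star :: "real \<Rightarrow> (nat \<Rightarrow> nat) \<Rightarrow> (nat \<Rightarrow> 'a \<Rightarrow> real) \<Rightarrow> (nat \<Rightarrow> 'a \<Rightarrow> real) \<Rightarrow> nat \<Rightarrow> 'a \<Rightarrow> real" where
  "mem_FDP_star d \<theta> alpha \<delta> t \<omega> =
     (\<Sum>j\<in>H0 \<theta> t. alpha j \<omega> / (d * decay_R d \<delta> (j - 1) \<omega> + 1))"

end

theory Submission imports Defs begin

(* Use the F(j-1)-measurable weight w(j) = 1 / (d R(j-1) + 1). A rejection at j gives
   R(j) = d R(j-1) + 1, and R(t) >= d^(t-j) R(j), so pointwise d^(t-j) delta(j) / R(t) <= w(j) delta(j).
   For a null j, conditioning on F(j-1) and super-uniformity with U = alpha(j) give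
   E[w(j) delta(j)] <= E[w(j) alpha(j)]; summing over the nulls bounds mem-FDR(t) by E[mem-FDP*(t)]. *)

lemma decay_R_Suc: "decay_R d \<delta> (Suc k) \<omega> = d * decay_R d \<delta> k \<omega> + \<delta> (Suc k) \<omega>"
proof -
  have "decay_R d \<delta> (Suc k) \<omega> = (\<Sum>i=1..k. d ^ (Suc k - i) * \<delta> i \<omega>) + \<delta> (Suc k) \<omega>"
    unfolding decay_R_def by simp
  also have "(\<Sum>i=1..k. d ^ (Suc k - i) * \<delta> i \<omega>) = d * decay_R d \<delta> k \<omega>"
    unfolding decay_R_def sum_distrib_left by (rule sum.cong) (auto simp: Suc_diff_le)
  finally show ?thesis .
qed

lemma decay_R_nonneg: "0 \<le> d \<Longrightarrow> (\<And>i. 0 \<le> \<delta> i \<omega>) \<Longrightarrow> 0 \<le> decay_R d \<delta> k \<omega>"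
  unfolding decay_R_def by (intro sum_nonneg) auto

lemma decay_R_ge_discounted:
  assumes "0 \<le> d" "\<And>i. 0 \<le> \<delta> i \<omega>" "j \<le> t"
  shows "d ^ (t - j) * decay_R d \<delta> j \<omega> \<le> decay_R d \<delta> t \<omega>"
  using assms(3)
proof (induction t rule: dec_induct)
  case base
  then show ?case by simp
next
  case (step n)
  have "d ^ (Suc n - j) * decay_R d \<delta> j \<omega> = d * (d ^ (n - j) * decay_R d \<delta> j \<omega>)"
    using step.hyps(1) by (simp add: Suc_diff_le)
  also have "\<dots> \<le> d * decay_R d \<delta> n \<omega>"
    using step.IH assms(1) by (rule mult_left_mono)
  also have "\<dots> \<le> decay_R d \<delta> (Suc n) \<omega>"
    using assms(2) by (simp add: decay_R_Suc)
  finally show ?case .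
qed

definition discount_weight :: "real \<Rightarrow> (nat \<Rightarrow> 'a \<Rightarrow> real) \<Rightarrow> nat \<Rightarrow> 'a \<Rightarrow> real" where
  "discount_weight d \<delta> j \<omega> = 1 / (d * decay_R d \<delta> (j - 1) \<omega> + 1)"

lemma discount_weight_range:
  assumes "0 \<le> d" "\<And>i. 0 \<le> \<delta> i \<omega>"
  shows "discount_weight d \<delta> j \<omega> \<in> {0..1}"
proof -
  have "0 \<le> d * decay_R d \<delta> (j - 1) \<omega>"
    using assms by (simp add: decay_R_nonneg)
  then show ?thesis unfolding discount_weight_def by simp
qed

lemma discounted_rejection_share_le:
  assumes "0 < d" "\<And>i. \<delta> i \<omega> \<in> {0, 1}" "1 \<le> j" "j \<le> t"
  shows "d ^ (t - j) * \<delta> j \<omega> / decay_R d \<delta> t \<omega> \<le> discount_weight d \<delta> j \<omega> * \<delta> j \<omega>"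
proof (cases "\<delta> j \<omega> = 0")
  case False
  then have \<delta>j: "\<delta> j \<omega> = 1" using assms(2) by blast
  have \<delta>_nonneg: "0 \<le> \<delta> i \<omega>" for i using assms(2)[of i] by auto
  have "0 \<le> decay_R d \<delta> (j - 1) \<omega>"
    using assms(1) \<delta>_nonneg by (intro decay_R_nonneg) auto
  then have denom_pos: "0 < d * decay_R d \<delta> (j - 1) \<omega> + 1"
    using assms(1) by (simp add: add_nonneg_pos)
  have "decay_R d \<delta> j \<omega> = d * decay_R d \<delta> (j - 1) \<omega> + 1"
    using decay_R_Suc[of d \<delta> "j - 1" \<omega>] assms(3) \<delta>j by simp
  then have R_ge: "d ^ (t - j) * (d * decay_R d \<delta> (j - 1) \<omega> + 1) \<le> decay_R d \<delta> t \<omega>"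
    using decay_R_ge_discounted[of d \<delta> \<omega> j t] assms(1,4) \<delta>_nonneg by simp
  have "0 < d ^ (t - j)" using assms(1) by simp
  then have "0 < decay_R d \<delta> t \<omega>"
    using R_ge denom_pos by (meson less_le_trans mult_pos_pos)
  then show ?thesis
    using R_ge denom_pos \<delta>j by (simp add: discount_weight_def divide_simps mult.commute)
qed simp

lemma space_dec_filtration: "space (dec_filtration M \<delta> n) = space M"
  unfolding dec_filtration_def by (simp add: space_measure_of_conv)

lemma measurable_dec_filtration:
  assumes "i \<in> {1..n}"
  shows "\<delta> i \<in> borel_measurable (dec_filtration M \<delta> n)"
proof (rule measurableI)
  fix A :: "real set"
  assume "A \<in> sets borel"
  then show "\<delta> i -` A \<inter> space (dec_filtration M \<delta> n) \<in> sets (dec_filtration M \<delta> n)"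
    using assms unfolding space_dec_filtration unfolding dec_filtration_def
    by (subst sets_measure_of) auto
qed simp

lemma subalgebra_dec_filtration:
  assumes "\<And>i. i \<in> {1..n} \<Longrightarrow> \<delta> i \<in> borel_measurable M"
  shows "subalgebra M (dec_filtration M \<delta> n)"
proof -
  let ?G = "{\<delta> j -` A \<inter> space M | j A. j \<in> {1..n} \<and> A \<in> sets (borel :: real measure)}"
  have "?G \<subseteq> Pow (space M)" "?G \<subseteq> sets M"
    using assms by (auto intro: measurable_sets)
  then have "sets (dec_filtration M \<delta> n) \<subseteq> sets M"
    unfolding dec_filtration_def by (simp add: sets_measure_of sets.sigma_sets_subset)
  then show ?thesis unfolding subalgebra_def by (simp add: space_dec_filtration)
qed

lemma borel_measurable_decay_R:
  "(\<And>i. i \<in> {1..k} \<Longrightarrow> \<delta> i \<in> borel_measurable N) \<Longrightarrow> decay_R d \<delta> k \<in> borel_measurable N"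
  unfolding decay_R_def by measurable auto

lemma discount_weight_measurable:
  "discount_weight d \<delta> j \<in> borel_measurable (dec_filtration M \<delta> (j - 1))"
proof -
  have "decay_R d \<delta> (j - 1) \<in> borel_measurable (dec_filtration M \<delta> (j - 1))"
    by (intro borel_measurable_decay_R measurable_dec_filtration)
  then show ?thesis unfolding discount_weight_def[abs_def] by measurable
qed

lemma mem_FDP_star_eq_sum_discount_weight:
  "mem_FDP_star d \<theta> alpha \<delta> t \<omega> = (\<Sum>j\<in>H0 \<theta> t. discount_weight d \<delta> j \<omega> * alpha j \<omega>)"
  unfolding mem_FDP_star_def discount_weight_def by simp

lemma borel_measurable_decision:
  "p i \<in> borel_measurable M \<Longrightarrow> alpha i \<in> borel_measurable M \<Longrightarrow>
    decision p alpha i \<in> borel_measurable M"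
  unfolding decision_def by measurable

lemma (in sigma_finite_subalgebra) integral_weighted_le_of_real_cond_exp_le:
  fixes w f g :: "'a \<Rightarrow> real"
  assumes "integrable M (\<lambda>x. w x * f x)" "integrable M (\<lambda>x. w x * g x)"
    and "w \<in> borel_measurable F" "f \<in> borel_measurable M"
    and "\<And>x. 0 \<le> w x" "AE x in M. real_cond_exp M F f x \<le> g x"
  shows "(\<integral>x. w x * f x \<partial>M) \<le> (\<integral>x. w x * g x \<partial>M)"
proof -
  note cond = real_cond_exp_intg[OF assms(1,3,4)]
  have "(\<integral>x. w x * f x \<partial>M) = (\<integral>x. w x * real_cond_exp M F f x \<partial>M)"
    using cond(2) by simp
  also have "\<dots> \<le> (\<integral>x. w x * g x \<partial>M)"
    using cond(1) assms(2) by (rule integral_mono_AE)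
      (use assms(6) in \<open>eventually_elim, simp add: assms(5) mult_left_mono\<close>)
  finally show ?thesis .
qed

lemma (in finite_measure) integrable_mult_unit_interval:
  fixes f g :: "'a \<Rightarrow> real"
  assumes "f \<in> borel_measurable M" "g \<in> borel_measurable M"
    and "\<And>x. x \<in> space M \<Longrightarrow> f x \<in> {0..1}" "\<And>x. x \<in> space M \<Longrightarrow> g x \<in> {0..1}"
  shows "integrable M (\<lambda>x. f x * g x)"
  using assms by (intro integrable_const_bound[where B=1] AE_I2) (auto simp: abs_mult mult_le_one)

locale online_testing = prob_space M for M :: "'a measure" +
  fixes p alpha :: "nat \<Rightarrow> 'a \<Rightarrow> real" and \<theta> :: "nat \<Rightarrow> nat"
  assumes p_measurable: "\<And>j. p j \<in> borel_measurable M"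
    and alpha_range: "\<And>j \<omega>. \<omega> \<in> space M \<Longrightarrow> alpha j \<omega> \<in> {0..1}"
    and alpha_predictable: "\<And>j. j \<ge> 1 \<Longrightarrow>
           alpha j \<in> borel_measurable (dec_filtration M (decision p alpha) (j - 1))"
    and super_uniform: "\<And>j U. j \<ge> 1 \<Longrightarrow> \<theta> j = 0 \<Longrightarrow>
           U \<in> borel_measurable (dec_filtration M (decision p alpha) (j - 1)) \<Longrightarrow>
           (\<forall>\<omega>\<in>space M. U \<omega> \<in> {0..1}) \<Longrightarrow>
           AE \<omega> in M. real_cond_exp M (dec_filtration M (decision p alpha) (j - 1))
                         (\<lambda>x. indicator {y \<in> space M. p j y \<le> U y} x) \<omega> \<le> U \<omega>"
begin

abbreviation \<delta> :: "nat \<Rightarrow> 'a \<Rightarrow> real" where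
  "\<delta> \<equiv> decision p alpha"

abbreviation filtration :: "nat \<Rightarrow> 'a measure" where
  "filtration n \<equiv> dec_filtration M \<delta> n"

lemma decision_range: "\<delta> i \<omega> \<in> {0, 1}"
  unfolding decision_def by simp

lemma decision_nonneg: "0 \<le> \<delta> i \<omega>"
  unfolding decision_def by simp

lemma decision_borel_measurable: "1 \<le> i \<Longrightarrow> \<delta> i \<in> borel_measurable M"
proof (induction i rule: less_induct)
  case (less i)
  have "subalgebra M (filtration (i - 1))"
    using less.IH by (intro subalgebra_dec_filtration) auto
  then have "alpha i \<in> borel_measurable M"
    using alpha_predictable[OF less.prems] by (rule measurable_from_subalg)
  then show ?case
    using p_measurable by (intro borel_measurable_decision)
qed

lemma subalgebra_filtration: "subalgebra M (filtration n)"
  using decision_borel_measurable by (intro subalgebra_dec_filtration) auto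

lemma alpha_borel_measurable: "1 \<le> j \<Longrightarrow> alpha j \<in> borel_measurable M"
  using measurable_from_subalg[OF subalgebra_filtration alpha_predictable] .

lemma null_weighted_rejection_le:
  assumes "1 \<le> j" "\<theta> j = 0"
    and w_meas: "w \<in> borel_measurable (filtration (j - 1))"
    and w_range: "\<And>x. w x \<in> {0..1}"
  shows "(\<integral>x. w x * \<delta> j x \<partial>M) \<le> (\<integral>x. w x * alpha j x \<partial>M)"
proof -
  interpret sigma_finite_subalgebra M "filtration (j - 1)"
    by (intro finite_measure_subalgebra_is_sigma_finite)
      (simp add: finite_measure_subalgebra_def finite_measure_subalgebra_axioms_def
        finite_measure_axioms subalgebra_filtration)
  have w_meas_M: "w \<in> borel_measurable M"
    using measurable_from_subalg[OF subalgebra_filtration w_meas] .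
  let ?I = "\<lambda>x. indicator {y \<in> space M. p j y \<le> alpha j y} x :: real"
  have I_eq: "?I x = \<delta> j x" if "x \<in> space M" for x
    using that unfolding decision_def by (simp add: indicator_def)
  have I_meas: "?I \<in> borel_measurable M"
    using measurable_cong[of M ?I "\<delta> j", OF I_eq] decision_borel_measurable[OF assms(1)] by simp
  have "(\<integral>x. w x * \<delta> j x \<partial>M) = (\<integral>x. w x * ?I x \<partial>M)"
    by (rule Bochner_Integration.integral_cong) (simp_all add: I_eq)
  also have "\<dots> \<le> (\<integral>x. w x * alpha j x \<partial>M)"
  proof (rule integral_weighted_le_of_real_cond_exp_le[OF _ _ w_meas I_meas])
    show "integrable M (\<lambda>x. w x * ?I x)"
      using w_meas_M I_meas w_range by (rule integrable_mult_unit_interval) simp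
    show "integrable M (\<lambda>x. w x * alpha j x)"
      using w_meas_M alpha_borel_measurable[OF assms(1)] w_range alpha_range
      by (rule integrable_mult_unit_interval)
    show "AE x in M. real_cond_exp M (filtration (j - 1)) ?I x \<le> alpha j x"
      using super_uniform[OF assms(1,2) alpha_predictable[OF assms(1)]] alpha_range by blast
  qed (use w_range in auto)
  finally show ?thesis .
qed

lemma mem_FDR_le_expected_mem_FDP_star:
  assumes "0 < d"
  shows "mem_FDR M d \<theta> \<delta> t \<le> (\<integral>\<omega>. mem_FDP_star d \<theta> alpha \<delta> t \<omega> \<partial>M)"
proof -
  let ?w = "discount_weight d \<delta>"
  have w_range: "?w j \<omega> \<in> {0..1}" for j \<omega>
    using assms by (intro discount_weight_range decision_nonneg) simp
  have w_measurable: "?w j \<in> borel_measurable M" for j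
    using subalgebra_filtration discount_weight_measurable by (rule measurable_from_subalg)
  have nulls: "1 \<le> j" "j \<le> t" "\<theta> j = 0" if "j \<in> H0 \<theta> t" for j
    using that unfolding H0_def by auto
  have integrable_w_\<delta>: "integrable M (\<lambda>\<omega>. ?w j \<omega> * \<delta> j \<omega>)" if "j \<in> H0 \<theta> t" for j
    using w_measurable decision_borel_measurable[OF nulls(1)[OF that]] w_range
    by (rule integrable_mult_unit_interval) (simp add: decision_def)
  have integrable_w_alpha: "integrable M (\<lambda>\<omega>. ?w j \<omega> * alpha j \<omega>)" if "j \<in> H0 \<theta> t" for j
    using w_measurable alpha_borel_measurable[OF nulls(1)[OF that]] w_range alpha_range
    by (rule integrable_mult_unit_interval)
  have "mem_FDR M d \<theta> \<delta> t = (\<integral>\<omega>. (\<Sum>j\<in>H0 \<theta> t. d ^ (t - j) * \<delta> j \<omega> / decay_R d \<delta> t \<omega>) \<partial>M)"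
    unfolding mem_FDR_def by (simp add: sum_divide_distrib)
  also have "\<dots> \<le> (\<integral>\<omega>. (\<Sum>j\<in>H0 \<theta> t. ?w j \<omega> * \<delta> j \<omega>) \<partial>M)"
  proof (rule integral_mono')
    show "integrable M (\<lambda>\<omega>. \<Sum>j\<in>H0 \<theta> t. ?w j \<omega> * \<delta> j \<omega>)"
      using integrable_w_\<delta> by (rule Bochner_Integration.integrable_sum)
    show "(\<Sum>j\<in>H0 \<theta> t. d ^ (t - j) * \<delta> j \<omega> / decay_R d \<delta> t \<omega>) \<le> (\<Sum>j\<in>H0 \<theta> t. ?w j \<omega> * \<delta> j \<omega>)"
      for \<omega>
      using nulls by (intro sum_mono discounted_rejection_share_le assms decision_range)
    show "0 \<le> (\<Sum>j\<in>H0 \<theta> t. ?w j \<omega> * \<delta> j \<omega>)" for \<omega>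
      using w_range by (intro sum_nonneg mult_nonneg_nonneg decision_nonneg) simp
  qed
  also have "\<dots> = (\<Sum>j\<in>H0 \<theta> t. (\<integral>\<omega>. ?w j \<omega> * \<delta> j \<omega> \<partial>M))"
    using integrable_w_\<delta> by (rule Bochner_Integration.integral_sum)
  also have "\<dots> \<le> (\<Sum>j\<in>H0 \<theta> t. (\<integral>\<omega>. ?w j \<omega> * alpha j \<omega> \<partial>M))"
    using nulls discount_weight_measurable w_range
    by (intro sum_mono null_weighted_rejection_le) auto
  also have "\<dots> = (\<integral>\<omega>. (\<Sum>j\<in>H0 \<theta> t. ?w j \<omega> * alpha j \<omega>) \<partial>M)"
    using integrable_w_alpha by (rule Bochner_Integration.integral_sum[symmetric])
  also have "\<dots> = (\<integral>\<omega>. mem_FDP_star d \<theta> alpha \<delta> t \<omega> \<partial>M)"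
    by (simp add: mem_FDP_star_eq_sum_discount_weight)
  finally show ?thesis .
qed

end

theorem theorem4:
  fixes M :: "'a measure"
    and p alpha :: "nat \<Rightarrow> 'a \<Rightarrow> real"
    and \<theta> :: "nat \<Rightarrow> nat"
    and \<alpha> d :: real
    and t :: nat
  assumes "prob_space M"
    and "\<alpha> \<in> {0<..<1}"
    and "d \<in> {0<..1}"
    and theta01: "\<And>j. \<theta> j \<in> {0, 1}"
    and p_meas: "\<And>j. p j \<in> borel_measurable M"
    and p_range: "\<And>j \<omega>. \<omega> \<in> space M \<Longrightarrow> p j \<omega> \<in> {0..1}"
    and alpha_range: "\<And>j \<omega>. \<omega> \<in> space M \<Longrightarrow> alpha j \<omega> \<in> {0..1}"
    and alpha_pred: "\<And>j. j \<ge> 1 \<Longrightarrow>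
           alpha j \<in> borel_measurable (dec_filtration M (decision p alpha) (j - 1))"
    and super_uniform: "\<And>j U. j \<ge> 1 \<Longrightarrow> \<theta> j = 0 \<Longrightarrow>
           U \<in> borel_measurable (dec_filtration M (decision p alpha) (j - 1)) \<Longrightarrow>
           (\<forall>\<omega>\<in>space M. U \<omega> \<in> {0..1}) \<Longrightarrow>
           AE \<omega> in M. real_cond_exp M (dec_filtration M (decision p alpha) (j - 1))
                         (\<lambda>x. indicator {y \<in> space M. p j y \<le> U y} x) \<omega> \<le> U \<omega>"
    and "t \<ge> 1"
    and "integral\<^sup>L M (mem_FDP_star d \<theta> alpha (decision p alpha) t) \<le> \<alpha>"
  shows "mem_FDR M d \<theta> (decision p alpha) t \<le> \<alpha>"
proof -
  interpret online_testing M p alpha \<theta>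
    using assms(1) p_meas alpha_range alpha_pred super_uniform
    by (simp add: online_testing_def online_testing_axioms_def)
  have "0 < d" using assms(3) by simp
  from mem_FDR_le_expected_mem_FDP_star[OF this] assms(11) show ?thesis
    by (rule order_trans)
qed

end
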